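(* Let $k\ge1$ and $0<a\le1$, and consider on $[0,+\infty)$ the function $$f_{a,k}(s):=\Big(1-\big(\tfrac{s}{a}\big)^{2k}\Big)^{2k}s+\Big(1-\Big(1-\big(\tfrac{s}{a}\big)^{2k}\Big)^{2k}\Big)\sqrt{s},$$ which is a semialgebraic function of class $C^{2k}$. Then: $f_{a,k}$ is non-negative and strictly increasing on $[0,a]$; the Taylor polynomial of $f_{a,k}$ of degree $2k$ at $s=0$ is $s$; the Taylor polynomials of degree $2k-1$ of $f_{a,k}$ and of $\sqrt{s}$ at $s=a$ coincide; and $f_{a,k}(s)\le\sqrt{s}$ for all $s\in[0,1]$. *)

theory Defs
  imports "HOL-Analysis.Analysis"
begin

definition f_ak :: "real \<Rightarrow> nat \<Rightarrow> real \<Rightarrow> real" where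
  "f_ak a k s = (1 - (s / a) ^ (2 * k)) ^ (2 * k) * s
               + (1 - (1 - (s / a) ^ (2 * k)) ^ (2 * k)) * sqrt s"

definition is_taylor_poly ::
    "(real \<Rightarrow> real) \<Rightarrow> real set \<Rightarrow> nat \<Rightarrow> real \<Rightarrow> (real \<Rightarrow> real) \<Rightarrow> bool" where
  "is_taylor_poly f S n x0 P \<longleftrightarrow>
     x0 \<in> S \<and>
     (\<exists>D :: nat \<Rightarrow> real \<Rightarrow> real.
        (\<forall>x\<in>S. D 0 x = f x) \<and>
        (\<forall>j<n. \<forall>x\<in>S. (D j has_real_derivative D (Suc j) x) (at x within S)) \<and>
        (\<forall>s. P s = (\<Sum>j\<le>n. D j x0 / fact j * (s - x0) ^ j)))"

end

theory Submission
  imports Defs "HOL-Computational_Algebra.Polynomial"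
begin

text \<open>With the weight w(s) = (1 - (s/a)^2k)^2k one has f = w s + (1 - w) sqrt s. On [0,a] the
  weight decreases from 1 to 0 while sqrt s \<ge> s, so f shifts from s towards the larger, increasing
  function sqrt s; this gives positivity, monotonicity and f \<le> sqrt s. Since 1 - w is divisible by s^2k, f = s w + (1 - w) sqrt s is of the
  form A + B sqrt s with polynomials A, B and s^2k dividing B; such a function can be differentiated
  2k times on [0,+\<infinity>), each time lowering the power of s dividing B by one, and its derivatives
  at 0 are those of A. So the Taylor polynomial at 0 is the truncation of s w = s - s (1 - w), i.e. s.
  Since w is divisible by (s - a)^2k, the Leibniz rule shows that all derivatives of order < 2k of
  f - sqrt s = w (s - sqrt s) vanish at a.\<close>

lemma is_taylor_polyI:
  assumes "x0 \<in> S"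
    and "\<And>x. x \<in> S \<Longrightarrow> D 0 x = f x"
    and "\<And>j x. j < n \<Longrightarrow> x \<in> S \<Longrightarrow> (D j has_real_derivative D (Suc j) x) (at x within S)"
    and "\<And>s. P s = (\<Sum>j\<le>n. D j x0 / fact j * (s - x0) ^ j)"
  shows "is_taylor_poly f S n x0 P"
  unfolding is_taylor_poly_def using assms by blast

lemma real_sqrt_ge_self: "0 \<le> s \<Longrightarrow> s \<le> 1 \<Longrightarrow> s \<le> sqrt (s::real)"
  by (intro real_le_rsqrt) (simp add: power2_eq_square mult_left_le)

lemma blend_sqrt_le_sqrt:
  fixes w s :: real
  assumes "0 \<le> w" "0 \<le> s" "s \<le> 1"
  shows "w * s + (1 - w) * sqrt s \<le> sqrt s"
proof -
  have "w * s + (1 - w) * sqrt s = sqrt s - w * (sqrt s - s)" by (simp add: algebra_simps)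
  then show ?thesis using assms real_sqrt_ge_self[of s] by simp
qed

lemma strict_mono_on_blend_sqrt:
  fixes w :: "real \<Rightarrow> real"
  assumes "b \<le> 1" and w_bounds: "\<And>s. s \<in> {0..b} \<Longrightarrow> 0 \<le> w s \<and> w s \<le> 1"
    and w_anti: "antimono_on {0..b} w"
  shows "strict_mono_on {0..b} (\<lambda>s. w s * s + (1 - w s) * sqrt s)"
proof (rule strict_mono_onI)
  fix x y assume xy: "x \<in> {0..b}" "y \<in> {0..b}" "x < y"
  have wy: "0 \<le> w y" "w y \<le> 1" using w_bounds[OF xy(2)] by auto
  have "w y \<le> w x" using monotone_onD[OF w_anti xy(1,2)] xy(3) by simp
  moreover have "x \<le> sqrt x" using real_sqrt_ge_self[of x] xy assms(1) by auto
  ultimately have "0 \<le> (w x - w y) * (sqrt x - x)" by simp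
  moreover have "0 < (1 - w y) * (sqrt y - sqrt x) + w y * (y - x)"
  proof (cases "w y = 1")
    case False
    then have "0 < (1 - w y) * (sqrt y - sqrt x)" using wy xy by simp
    moreover have "0 \<le> w y * (y - x)" using wy xy by simp
    ultimately show ?thesis by linarith
  qed (use xy in simp)
  moreover have "(w y * y + (1 - w y) * sqrt y) - (w x * x + (1 - w x) * sqrt x)
      = (1 - w y) * (sqrt y - sqrt x) + w y * (y - x) + (w x - w y) * (sqrt x - x)"
    by (simp add: algebra_simps)
  ultimately show "w x * x + (1 - w x) * sqrt x < w y * y + (1 - w y) * sqrt y"
    by linarith
qed

lemma pow_dvd_pderiv:
  fixes p q :: "'a::{comm_semiring_1, semiring_no_zero_divisors} poly"
  assumes "p ^ Suc m dvd q"
  shows "p ^ m dvd pderiv q"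
proof -
  obtain r where q: "q = p ^ Suc m * r" using assms by (elim dvdE)
  have "pderiv q = smult (of_nat (Suc m)) (p ^ m) * pderiv p * r + p ^ Suc m * pderiv r"
    unfolding q pderiv_mult pderiv_power_Suc by (simp add: ac_simps)
  also have "p ^ m dvd \<dots>"
    by (intro dvd_add dvd_smult dvd_mult2 dvd_mult) auto
  finally show ?thesis .
qed

lemma DERIV_self_mult_sqrt:
  fixes x :: real
  assumes "0 \<le> x"
  shows "((\<lambda>s. s * sqrt s) has_real_derivative 3 / 2 * sqrt x) (at x within {0..})"
proof (cases "x = 0")
  case False
  then have "0 < x" using assms by simp
  then have "((\<lambda>s. s * sqrt s) has_real_derivative 1 * sqrt x + inverse (sqrt x) / 2 * x) (at x)"
    by (intro DERIV_mult DERIV_ident DERIV_real_sqrt)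
  moreover have "1 * sqrt x + inverse (sqrt x) / 2 * x = 3 / 2 * sqrt x"
    using \<open>0 < x\<close> by (simp add: field_simps)
  ultimately show ?thesis by (metis has_field_derivative_at_within)
next
  case True
  have "(sqrt \<longlongrightarrow> 0) (at 0 within {0..})"
    using tendsto_real_sqrt[OF tendsto_ident_at[of 0 "{0..}"]] by simp
  moreover have "\<forall>\<^sub>F y in at 0 within {0..}. sqrt y = (y * sqrt y - 0 * sqrt 0) / (y - 0)"
    by (auto simp: eventually_at_filter)
  ultimately have "((\<lambda>y. (y * sqrt y - 0 * sqrt 0) / (y - 0)) \<longlongrightarrow> 0) (at 0 within {0..})"
    using tendsto_cong by fastforce
  then show ?thesis using True by (simp add: has_field_derivative_iff)
qed

definition sqrt_deriv_poly :: "real poly \<Rightarrow> real poly" where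
  "sqrt_deriv_poly B = pderiv B + smult (1 / 2) (B div [:0, 1:])"

lemma DERIV_poly_mult_sqrt:
  assumes "[:0, 1:] dvd B" "0 \<le> x"
  shows "((\<lambda>s. poly B s * sqrt s) has_real_derivative poly (sqrt_deriv_poly B) x * sqrt x)
    (at x within {0..})"
proof -
  obtain C where B: "B = [:0, 1:] * C" using assms(1) by (elim dvdE)
  have "B div [:0, 1:] = C" unfolding B by (rule nonzero_mult_div_cancel_left) simp
  have "((\<lambda>s. poly C s * (s * sqrt s)) has_real_derivative
      poly (pderiv C) x * (x * sqrt x) + 3 / 2 * sqrt x * poly C x) (at x within {0..})"
    by (intro DERIV_mult poly_DERIV[THEN has_field_derivative_at_within] DERIV_self_mult_sqrt assms(2))
  moreover have "poly (pderiv C) x * (x * sqrt x) + 3 / 2 * sqrt x * poly C x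
      = poly (sqrt_deriv_poly B) x * sqrt x"
    unfolding sqrt_deriv_poly_def \<open>B div [:0, 1:] = C\<close>
    by (simp add: B pderiv_mult pderiv_pCons algebra_simps)
  moreover have "(\<lambda>s. poly B s * sqrt s) = (\<lambda>s. poly C s * (s * sqrt s))"
    by (simp add: B fun_eq_iff ac_simps)
  ultimately show ?thesis by simp
qed

lemma pow_dvd_sqrt_deriv_poly:
  assumes "[:0, 1:] ^ Suc m dvd B"
  shows "[:0, 1:] ^ m dvd sqrt_deriv_poly B"
proof -
  obtain C where B: "B = [:0, 1:] ^ Suc m * C" using assms by (elim dvdE)
  have "B div [:0, 1:] = [:0, 1:] ^ m * C"
    unfolding B power_Suc mult.assoc by (rule nonzero_mult_div_cancel_left) simp
  then show ?thesis unfolding sqrt_deriv_poly_def using pow_dvd_pderiv[OF assms]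
    by (auto intro!: dvd_add dvd_smult)
qed

lemma pow_dvd_funpow_sqrt_deriv_poly:
  assumes "[:0, 1:] ^ (m + j) dvd B"
  shows "[:0, 1:] ^ m dvd (sqrt_deriv_poly ^^ j) B"
  using assms
proof (induction j arbitrary: m)
  case (Suc j)
  then have "[:0, 1:] ^ Suc m dvd (sqrt_deriv_poly ^^ j) B" by (metis add_Suc add_Suc_right)
  from pow_dvd_sqrt_deriv_poly[OF this] show ?case by simp
qed simp

lemma is_taylor_poly_poly_plus_poly_mult_sqrt:
  assumes "[:0, 1:] ^ n dvd B"
  shows "is_taylor_poly (\<lambda>s. poly A s + poly B s * sqrt s) {0..} n 0
    (\<lambda>s. \<Sum>j\<le>n. coeff A j * s ^ j)"
proof -
  define D where
    "D j s = poly ((pderiv ^^ j) A) s + poly ((sqrt_deriv_poly ^^ j) B) s * sqrt s" for j s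
  have "(D j has_real_derivative D (Suc j) x) (at x within {0..})"
    if "j < n" "x \<in> {0..}" for j x
  proof -
    have "[:0, 1:] ^ (1 + j) dvd B"
      by (rule dvd_trans[OF le_imp_power_dvd assms]) (use that(1) in simp)
    then have "[:0, 1:] dvd (sqrt_deriv_poly ^^ j) B"
      using pow_dvd_funpow_sqrt_deriv_poly by fastforce
    then show ?thesis unfolding D_def[abs_def] using that(2)
      by (auto intro!: DERIV_add poly_DERIV[THEN has_field_derivative_at_within] DERIV_poly_mult_sqrt)
  qed
  moreover have "D j 0 = fact j * coeff A j" for j
    by (simp add: D_def poly_0_coeff_0 coeff_higher_pderiv pochhammer_fact)
  ultimately show ?thesis by (intro is_taylor_polyI[where D = D]) (auto simp: D_def)
qed

fun poly_mult_derivs :: "real poly \<Rightarrow> (nat \<Rightarrow> real \<Rightarrow> real) \<Rightarrow> nat \<Rightarrow> nat \<Rightarrow> real \<Rightarrow> real" where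
  "poly_mult_derivs G H i 0 s = poly G s * H i s"
| "poly_mult_derivs G H i (Suc j) s =
     poly_mult_derivs (pderiv G) H i j s + poly_mult_derivs G H (Suc i) j s"

lemma DERIV_poly_mult_derivs:
  assumes "\<And>i x. x \<in> S \<Longrightarrow> (H i has_real_derivative H (Suc i) x) (at x within S)" "x \<in> S"
  shows "(poly_mult_derivs G H i j has_real_derivative poly_mult_derivs G H i (Suc j) x) (at x within S)"
proof (induction j arbitrary: G i)
  case 0
  have "((\<lambda>s. poly G s * H i s) has_real_derivative
      poly (pderiv G) x * H i x + H (Suc i) x * poly G x) (at x within S)"
    by (intro DERIV_mult poly_DERIV[THEN has_field_derivative_at_within] assms)
  then show ?case by (simp add: mult.commute)
next
  case (Suc j)
  show ?case using DERIV_add[OF Suc.IH[of "pderiv G" i] Suc.IH[of G "Suc i"]] by simp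
qed

lemma poly_mult_derivs_root:
  assumes "[:-c, 1:] ^ m dvd G" "j < m"
  shows "poly_mult_derivs G H i j c = 0"
  using assms
proof (induction j arbitrary: G i m)
  case 0
  then have "[:-c, 1:] dvd G" by (metis dvd_power dvd_trans neq0_conv)
  then show ?case by (simp add: poly_eq_0_iff_dvd)
next
  case (Suc j)
  then obtain m' where m: "m = Suc m'" "j < m'" by (cases m) auto
  have "[:-c, 1:] ^ m' dvd pderiv G" by (rule pow_dvd_pderiv) (use Suc.prems(1) m(1) in simp)
  then show ?case
    using Suc.IH[where G = "pderiv G" and m = m' and i = i] Suc.IH[where G = G and m = m and i = "Suc i"]
      Suc.prems m by simp
qed

lemma is_taylor_poly_add_poly_mult:
  assumes "is_taylor_poly g S n c P"
    and "[:-c, 1:] ^ Suc n dvd G"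
    and "\<And>i x. x \<in> S \<Longrightarrow> (H i has_real_derivative H (Suc i) x) (at x within S)"
    and "\<And>x. x \<in> S \<Longrightarrow> f x = g x + poly G x * H 0 x"
  shows "is_taylor_poly f S n c P"
proof -
  obtain D where c: "c \<in> S" and D0: "\<forall>x\<in>S. D 0 x = g x"
    and D: "\<forall>j<n. \<forall>x\<in>S. (D j has_real_derivative D (Suc j) x) (at x within S)"
    and P: "\<forall>s. P s = (\<Sum>j\<le>n. D j c / fact j * (s - c) ^ j)"
    using assms(1) unfolding is_taylor_poly_def by blast
  define Df where "Df j x = D j x + poly_mult_derivs G H 0 j x" for j x
  have "Df j c = D j c" if "j \<le> n" for j
    using poly_mult_derivs_root[OF assms(2)] that by (simp add: Df_def)
  then have "P s = (\<Sum>j\<le>n. Df j c / fact j * (s - c) ^ j)" for s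
    using P by simp
  moreover have "(Df j has_real_derivative Df (Suc j) x) (at x within S)"
    if "j < n" "x \<in> S" for j x
  proof -
    have "(poly_mult_derivs G H 0 j has_real_derivative poly_mult_derivs G H 0 (Suc j) x) (at x within S)"
      by (rule DERIV_poly_mult_derivs) (use assms(3) that(2) in auto)
    then show ?thesis unfolding Df_def[abs_def] using D that by (intro DERIV_add) auto
  qed
  ultimately show ?thesis using c D0 assms(4)
    by (intro is_taylor_polyI[where D = Df]) (auto simp: Df_def)
qed

definition sqrt_derivs :: "nat \<Rightarrow> real \<Rightarrow> real" where
  "sqrt_derivs j s = (\<Prod>i<j. 1 / 2 - real i) * s powr (1 / 2 - real j)"

lemma sqrt_derivs_0: "0 \<le> s \<Longrightarrow> sqrt_derivs 0 s = sqrt s"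
  by (simp add: sqrt_derivs_def powr_half_sqrt)

lemma DERIV_sqrt_derivs:
  assumes "0 < x"
  shows "(sqrt_derivs j has_real_derivative sqrt_derivs (Suc j) x) (at x within S)"
proof (rule has_field_derivative_at_within)
  have "((\<lambda>s. (\<Prod>i<j. 1 / 2 - real i) * s powr (1 / 2 - real j)) has_real_derivative
      (\<Prod>i<j. 1 / 2 - real i) * ((1 / 2 - real j) * x powr (1 / 2 - real j - real 1) * 1)) (at x)"
    by (intro DERIV_cmult DERIV_fun_powr DERIV_ident assms)
  moreover have "(\<Prod>i<j. 1 / 2 - real i) * ((1 / 2 - real j) * x powr (1 / 2 - real j - real 1) * 1)
      = sqrt_derivs (Suc j) x"
    by (simp add: sqrt_derivs_def algebra_simps)
  ultimately show "(sqrt_derivs j has_real_derivative sqrt_derivs (Suc j) x) (at x)"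
    unfolding sqrt_derivs_def[of j, abs_def] by simp
qed

lemma is_taylor_poly_sqrt:
  assumes "0 < c"
  shows "is_taylor_poly sqrt {0<..} n c (\<lambda>s. \<Sum>j\<le>n. sqrt_derivs j c / fact j * (s - c) ^ j)"
  using assms by (intro is_taylor_polyI[where D = sqrt_derivs] DERIV_sqrt_derivs) (auto simp: sqrt_derivs_0)

definition f_weight :: "real \<Rightarrow> nat \<Rightarrow> real \<Rightarrow> real" where
  "f_weight a k s = (1 - (s / a) ^ (2 * k)) ^ (2 * k)"

lemma f_ak_eq_blend: "f_ak a k s = f_weight a k s * s + (1 - f_weight a k s) * sqrt s"
  unfolding f_ak_def f_weight_def ..

lemma f_weight_nonneg: "0 \<le> f_weight a k s"
  unfolding f_weight_def by (simp add: zero_le_even_power)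

lemma f_weight_le_one:
  assumes "0 < a" "s \<in> {0..a}"
  shows "f_weight a k s \<le> 1"
proof -
  have "0 \<le> (s / a) ^ (2 * k)" "(s / a) ^ (2 * k) \<le> 1" using assms by (auto intro: power_le_one)
  then show ?thesis unfolding f_weight_def by (auto intro: power_le_one)
qed

lemma antimono_on_f_weight:
  assumes "0 < a"
  shows "antimono_on {0..a} (f_weight a k)"
proof (rule monotone_onI)
  fix x y assume xy: "x \<in> {0..a}" "y \<in> {0..a}" "x \<le> y"
  then have "0 \<le> x / a" "x / a \<le> y / a" "y / a \<le> 1"
    using assms by (auto intro: divide_right_mono)
  then have "(x / a) ^ (2 * k) \<le> (y / a) ^ (2 * k)" "(y / a) ^ (2 * k) \<le> 1"
    by (auto intro: power_mono power_le_one)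
  then show "f_weight a k y \<le> f_weight a k x"
    unfolding f_weight_def by (auto intro: power_mono)
qed

lemma f_ak_nonneg:
  assumes "0 < a" "s \<in> {0..a}"
  shows "0 \<le> f_ak a k s"
  using f_weight_nonneg[of a k s] f_weight_le_one[OF assms, of k] assms(2)
  unfolding f_ak_eq_blend by simp

lemma strict_mono_on_f_ak:
  assumes "0 < a" "a \<le> 1"
  shows "strict_mono_on {0..a} (f_ak a k)"
  unfolding f_ak_eq_blend[abs_def]
  using f_weight_nonneg f_weight_le_one[OF assms(1)] antimono_on_f_weight[OF assms(1)]
  by (intro strict_mono_on_blend_sqrt assms(2)) auto

lemma f_ak_le_sqrt: "s \<in> {0..1} \<Longrightarrow> f_ak a k s \<le> sqrt s"
  unfolding f_ak_eq_blend by (intro blend_sqrt_le_sqrt f_weight_nonneg) auto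

definition f_weight_poly :: "real \<Rightarrow> nat \<Rightarrow> real poly" where
  "f_weight_poly a k = (1 - [:0, 1 / a:] ^ (2 * k)) ^ (2 * k)"

lemma poly_f_weight_poly: "poly (f_weight_poly a k) s = f_weight a k s"
  by (simp add: f_weight_poly_def f_weight_def poly_power)

lemma f_ak_eq_poly_plus_poly_mult_sqrt:
  "f_ak a k s = poly ([:0, 1:] * f_weight_poly a k) s + poly (1 - f_weight_poly a k) s * sqrt s"
  by (simp add: f_ak_eq_blend poly_f_weight_poly)

lemma pow_dvd_one_minus_f_weight_poly: "[:0, 1:] ^ (2 * k) dvd 1 - f_weight_poly a k"
proof -
  have "[:0, 1:] dvd [:0, 1 / a:]" by (rule dvdI[of _ _ "[:1 / a:]"]) simp
  then have "[:0, 1:] ^ (2 * k) dvd [:0, 1 / a:] ^ (2 * k)" by (rule dvd_power_same)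
  also have "\<dots> dvd 1 - f_weight_poly a k"
    unfolding f_weight_poly_def one_diff_power_eq[of "1 - _"] by simp
  finally show ?thesis .
qed

lemma root_pow_dvd_f_weight_poly:
  assumes "a \<noteq> 0"
  shows "[:-a, 1:] ^ (2 * k) dvd f_weight_poly a k"
proof -
  have "poly (1 - [:0, 1 / a:] ^ (2 * k)) a = 0" using assms by (simp add: poly_power)
  then have "[:-a, 1:] dvd 1 - [:0, 1 / a:] ^ (2 * k)" by (subst poly_eq_0_iff_dvd[symmetric])
  then show ?thesis unfolding f_weight_poly_def by (rule dvd_power_same)
qed

lemma is_taylor_poly_f_ak_0:
  assumes "1 \<le> k"
  shows "is_taylor_poly (f_ak a k) {0..} (2 * k) 0 (\<lambda>s. s)"
proof -
  let ?G = "f_weight_poly a k"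
  have "monom 1 (2 * k) dvd 1 - ?G"
    using pow_dvd_one_minus_f_weight_poly[of k a] by (simp add: monom_altdef)
  then have "coeff 1 i - coeff ?G i = 0" if "i < 2 * k" for i
    using that unfolding monom_1_dvd_iff' coeff_diff[symmetric] by blast
  then have "coeff ?G i = of_bool (i = 0)" if "i < 2 * k" for i
    using that by (simp split: if_splits)
  then have coeff_shifted: "coeff ([:0, 1:] * ?G) j = of_bool (j = 1)" if "j \<le> 2 * k" for j
    using that by (cases j) auto
  have "(\<Sum>j\<le>2 * k. coeff ([:0, 1:] * ?G) j * s ^ j) = s" for s
  proof -
    have "(\<Sum>j\<le>2 * k. coeff ([:0, 1:] * ?G) j * s ^ j) = (\<Sum>j\<le>2 * k. if j = 1 then s else 0)"
      by (intro sum.cong refl) (subst coeff_shifted, auto)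
    also have "\<dots> = s" using assms by simp
    finally show ?thesis .
  qed
  then have truncation: "(\<lambda>s. \<Sum>j\<le>2 * k. coeff ([:0, 1:] * ?G) j * s ^ j) = (\<lambda>s. s)"
    by (intro ext)
  have f_ak: "f_ak a k = (\<lambda>s. poly ([:0, 1:] * ?G) s + poly (1 - ?G) s * sqrt s)"
    by (simp add: fun_eq_iff f_ak_eq_poly_plus_poly_mult_sqrt)
  show ?thesis
    unfolding f_ak
    using is_taylor_poly_poly_plus_poly_mult_sqrt[OF pow_dvd_one_minus_f_weight_poly[of k a], of "[:0, 1:] * ?G"]
    unfolding truncation .
qed

lemma is_taylor_poly_f_ak_a:
  assumes "1 \<le> k" "0 < a"
  shows "is_taylor_poly (f_ak a k) {0<..} (2 * k - 1) a
    (\<lambda>s. \<Sum>j\<le>2 * k - 1. sqrt_derivs j a / fact j * (s - a) ^ j)"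
proof -
  define L :: "nat \<Rightarrow> real \<Rightarrow> real" where "L i s = (if i = 0 then s else of_bool (i = 1))" for i s
  define H where "H i s = L i s - sqrt_derivs i s" for i s
  have "(L i has_real_derivative L (Suc i) x) (at x within {0<..})" for i x
    by (cases i) (simp_all add: L_def[abs_def] DERIV_ident)
  then have "(H i has_real_derivative H (Suc i) x) (at x within {0<..})" if "x \<in> {0<..}" for i x
    unfolding H_def[abs_def] using that by (intro DERIV_diff DERIV_sqrt_derivs) auto
  moreover have "f_ak a k x = sqrt x + poly (f_weight_poly a k) x * H 0 x" if "x \<in> {0<..}" for x
    using that by (simp add: H_def L_def f_ak_eq_blend poly_f_weight_poly sqrt_derivs_0 algebra_simps)
  moreover have "[:-a, 1:] ^ Suc (2 * k - 1) dvd f_weight_poly a k"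
    using root_pow_dvd_f_weight_poly[of a k] assms by simp
  ultimately show ?thesis
    by (intro is_taylor_poly_add_poly_mult[OF is_taylor_poly_sqrt[OF assms(2)]]) auto
qed

theorem lemma3p1:
  fixes a :: real and k :: nat
  assumes "k \<ge> 1" and "0 < a" and "a \<le> 1"
  shows "(\<forall>s\<in>{0..a}. f_ak a k s \<ge> 0)
    \<and> strict_mono_on {0..a} (f_ak a k)
    \<and> is_taylor_poly (f_ak a k) {0..} (2 * k) 0 (\<lambda>s. s)
    \<and> (\<exists>P. is_taylor_poly (f_ak a k) {0<..} (2 * k - 1) a P
           \<and> is_taylor_poly sqrt {0<..} (2 * k - 1) a P)
    \<and> (\<forall>s\<in>{0..1}. f_ak a k s \<le> sqrt s)"
  using f_ak_nonneg[OF assms(2)] strict_mono_on_f_ak[OF assms(2,3)]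
    is_taylor_poly_f_ak_0[OF assms(1)] is_taylor_poly_f_ak_a[OF assms(1,2)]
    is_taylor_poly_sqrt[OF assms(2)] f_ak_le_sqrt
  by blast

end
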